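(* Let $\Omega=\{P_1,\dots,P_n\}\subseteq\mathbb{F}[x;\sigma,\delta]$ be a set of $n$ distinct skew polynomials of degree at least $1$ with $I(\Omega)\ne\{0\}$, and let $N=\deg(F_\Omega)$. For $F\in\mathbb{F}[x;\sigma,\delta]$ and a non-zero $P$, let $F(P)$ denote the remainder of the right Euclidean division of $F$ by $P$ (so $\deg F(P)<\deg P$), viewed as an element of the left module $\mathbb{F}[x;\sigma,\delta]/(P)$, where $(P)$ is the left ideal generated by $P$. The following are equivalent: (1) $\Omega$ is P-independent; (2) the left $\mathbb{F}$-linear map $\phi:\mathbb{F}[x;\sigma,\delta]_N\to\prod_{i=1}^n\mathbb{F}[x;\sigma,\delta]/(P_i)$, $\phi(F)=(F(P_i))_{i=1}^n$, is an isomorphism of left vector spaces, where $\mathbb{F}[x;\sigma,\delta]_N=\{F:\deg F<N\}$; (3) the left $\mathbb{F}$-linear map $\psi:\mathbb{F}[x;\sigma,\delta]\to\prod_{i=1}^n\mathbb{F}[x;\sigma,\delta]/(P_i)$, $\psi(F)=(F(P_i))_{i=1}^n$, is surjective.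
   Context: Let $\mathbb{F}$ be a division ring, $\sigma$ a ring endomorphism of $\mathbb{F}$ and $\delta$ a $\sigma$-derivation. $\mathbb{F}[x;\sigma,\delta]$ is the skew polynomial ring (left $\mathbb{F}$-vector space with basis $\{x^i\}$, $xa=\sigma(a)x+\delta(a)$), a domain with additive degree and right Euclidean division. For a set $\Omega$ of skew polynomials, $I(\Omega)$ is the left ideal of all $F$ right-divisible by every element of $\Omega$, and $F_\Omega$ is its monic generator of minimal degree (or $0$ if $I(\Omega)=\{0\}$). $\Omega$ is P-independent if it is finite, $I(\Omega)\ne\{0\}$ and $\deg F_\Omega=\sum_{P\in\Omega}\deg P$. *)

theory Defs
  imports "HOL-Computational_Algebra.Polynomial" "HOL-Library.FuncSet"
begin

text \<open>Skew polynomials F[x;sigma,delta] over a division ring are represented by their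
  left coefficient vectors (the type 'a poly, F = sum of (coeff F i) x^i, coefficients on the left);
  addition and left scalar multiplication (lsmult) are the usual ones, and the skew product is
  defined below from the rule x a = sigma(a) x + delta(a).\<close>

definition ring_endo :: "('a::division_ring \<Rightarrow> 'a) \<Rightarrow> bool" where
  "ring_endo \<sigma> \<longleftrightarrow> (\<forall>a b. \<sigma> (a + b) = \<sigma> a + \<sigma> b) \<and> (\<forall>a b. \<sigma> (a * b) = \<sigma> a * \<sigma> b) \<and> \<sigma> 1 = 1"

definition sigma_derivation :: "('a::division_ring \<Rightarrow> 'a) \<Rightarrow> ('a \<Rightarrow> 'a) \<Rightarrow> bool" where
  "sigma_derivation \<sigma> \<delta> \<longleftrightarrow> (\<forall>a b. \<delta> (a + b) = \<delta> a + \<delta> b) \<and>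
     (\<forall>a b. \<delta> (a * b) = \<sigma> a * \<delta> b + \<delta> a * b)"

definition lsmult :: "'a::division_ring \<Rightarrow> 'a poly \<Rightarrow> 'a poly" where
  "lsmult a p = map_poly (\<lambda>c. a * c) p"

text \<open>xpow_mul sigma delta i b is the skew polynomial x^i b.\<close>
fun xpow_mul :: "('a::division_ring \<Rightarrow> 'a) \<Rightarrow> ('a \<Rightarrow> 'a) \<Rightarrow> nat \<Rightarrow> 'a \<Rightarrow> 'a poly" where
  "xpow_mul \<sigma> \<delta> 0 b = [:b:]"
| "xpow_mul \<sigma> \<delta> (Suc i) b =
     pCons 0 (map_poly \<sigma> (xpow_mul \<sigma> \<delta> i b)) + map_poly \<delta> (xpow_mul \<sigma> \<delta> i b)"

text \<open>Right multiplication by x^j.\<close>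
definition xshift :: "nat \<Rightarrow> 'a::zero poly \<Rightarrow> 'a poly" where
  "xshift j p = ((pCons 0) ^^ j) p"

definition skew_mult :: "('a::division_ring \<Rightarrow> 'a) \<Rightarrow> ('a \<Rightarrow> 'a) \<Rightarrow> 'a poly \<Rightarrow> 'a poly \<Rightarrow> 'a poly" where
  "skew_mult \<sigma> \<delta> F G =
     (\<Sum>i\<le>degree F. \<Sum>j\<le>degree G. lsmult (coeff F i) (xshift j (xpow_mul \<sigma> \<delta> i (coeff G j))))"

definition skew_I :: "('a::division_ring \<Rightarrow> 'a) \<Rightarrow> ('a \<Rightarrow> 'a) \<Rightarrow> 'a poly set \<Rightarrow> 'a poly set" where
  "skew_I \<sigma> \<delta> \<Omega> = {F. \<forall>P\<in>\<Omega>. \<exists>Q. F = skew_mult \<sigma> \<delta> Q P}"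

definition skew_F :: "('a::division_ring \<Rightarrow> 'a) \<Rightarrow> ('a \<Rightarrow> 'a) \<Rightarrow> 'a poly set \<Rightarrow> 'a poly" where
  "skew_F \<sigma> \<delta> \<Omega> = (if skew_I \<sigma> \<delta> \<Omega> = {0} then 0 else
     (THE F. F \<in> skew_I \<sigma> \<delta> \<Omega> \<and> F \<noteq> 0 \<and> lead_coeff F = 1 \<and>
        (\<forall>G\<in>skew_I \<sigma> \<delta> \<Omega>. G \<noteq> 0 \<longrightarrow> degree F \<le> degree G)))"

definition P_independent :: "('a::division_ring \<Rightarrow> 'a) \<Rightarrow> ('a \<Rightarrow> 'a) \<Rightarrow> 'a poly set \<Rightarrow> bool" where
  "P_independent \<sigma> \<delta> \<Omega> \<longleftrightarrow> finite \<Omega> \<and> skew_I \<sigma> \<delta> \<Omega> \<noteq> {0} \<and>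
     degree (skew_F \<sigma> \<delta> \<Omega>) = (\<Sum>P\<in>\<Omega>. degree P)"

definition deg_less :: "nat \<Rightarrow> 'a::zero poly set" where
  "deg_less N = {F. F = 0 \<or> degree F < N}"

text \<open>F(P): remainder of the right Euclidean division of F by P.
  The quotient module F[x;sigma,delta]/(P) is represented by the set of
  remainders deg_less (degree P) (canonical representatives).\<close>
definition skew_rem :: "('a::division_ring \<Rightarrow> 'a) \<Rightarrow> ('a \<Rightarrow> 'a) \<Rightarrow> 'a poly \<Rightarrow> 'a poly \<Rightarrow> 'a poly" where
  "skew_rem \<sigma> \<delta> F P = (THE R. R \<in> deg_less (degree P) \<and> (\<exists>Q. F = skew_mult \<sigma> \<delta> Q P + R))"

definition left_linear_on :: "'a::division_ring poly set \<Rightarrow> nat \<Rightarrow> ('a poly \<Rightarrow> nat \<Rightarrow> 'a poly) \<Rightarrow> bool" where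
  "left_linear_on V n f \<longleftrightarrow>
     (\<forall>F\<in>V. \<forall>G\<in>V. f (F + G) = (\<lambda>i\<in>{..<n}. f F i + f G i)) \<and>
     (\<forall>a. \<forall>F\<in>V. f (lsmult a F) = (\<lambda>i\<in>{..<n}. lsmult a (f F i)))"

end

theory Submission
  imports Defs
begin

text \<open>The remainder map \<open>\<phi>\<close> is left-linear. It is injective on polynomials of degree
  \<open>< N\<close>: two such polynomials with the same remainders differ by an element of \<open>I(\<Omega>)\<close>, and
  non-zero elements of \<open>I(\<Omega>)\<close> have degree \<open>\<ge> N\<close>. It has the same image on all skew
  polynomials, since \<open>F\<close> and its remainder modulo \<open>F\<^sub>\<Omega>\<close> have the same remainders. So (2) and
  (3) both say that an injective linear map from a space of dimension \<open>N\<close> into one of dimension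
  \<open>\<Sum> deg P\<^sub>i\<close> is onto, which by dimension counting over the division ring means
  \<open>N = \<Sum> deg P\<^sub>i\<close>, i.e. (1).\<close>

section \<open>Linear maps between coordinate spaces over a division ring\<close>

text \<open>The left vector space \<open>\<bbbF>\<^sup>I\<close> for finite \<open>I\<close> is modelled by the functions vanishing outside
  \<open>I\<close>, with scalars acting by left multiplication.\<close>
definition coord_space :: "'i set \<Rightarrow> ('i \<Rightarrow> 'a::zero) set" where
  "coord_space I = {v. \<forall>x. x \<notin> I \<longrightarrow> v x = 0}"

definition coord_linear :: "'i set \<Rightarrow> (('i \<Rightarrow> 'a::division_ring) \<Rightarrow> ('j \<Rightarrow> 'a)) \<Rightarrow> bool" where
  "coord_linear I L \<longleftrightarrow>
     (\<forall>u\<in>coord_space I. \<forall>v\<in>coord_space I. L (\<lambda>x. u x + v x) = (\<lambda>y. L u y + L v y)) \<and>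
     (\<forall>a. \<forall>v\<in>coord_space I. L (\<lambda>x. a * v x) = (\<lambda>y. a * L v y))"

definition unit_vec :: "'i \<Rightarrow> 'i \<Rightarrow> 'a::{zero,one}" where
  "unit_vec x = (\<lambda>z. if z = x then 1 else 0)"

lemma coord_space_scale:
  "v \<in> coord_space I \<Longrightarrow> (\<lambda>x. a * v x :: 'a::mult_zero) \<in> coord_space I"
  by (auto simp: coord_space_def)

lemma coord_space_sum:
  "(\<And>k. k \<in> K \<Longrightarrow> f k \<in> coord_space I) \<Longrightarrow> (\<lambda>x. \<Sum>k\<in>K. f k x :: 'a::comm_monoid_add) \<in> coord_space I"
  by (auto simp: coord_space_def intro!: sum.neutral)

lemma coord_space_mono: "I \<subseteq> J \<Longrightarrow> coord_space I \<subseteq> coord_space J"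
  by (auto simp: coord_space_def)

lemma unit_vec_in_coord_space: "x \<in> I \<Longrightarrow> unit_vec x \<in> coord_space I"
  by (auto simp: coord_space_def unit_vec_def)

lemma coord_space_expand:
  assumes "finite I" "v \<in> coord_space I"
  shows "v = (\<lambda>z. \<Sum>x\<in>I. v x * unit_vec x z :: 'a::semiring_1)"
proof
  fix z
  have "(\<Sum>x\<in>I. v x * unit_vec x z) = (\<Sum>x\<in>I. if x = z then v z else 0)"
    by (rule sum.cong) (auto simp: unit_vec_def)
  also have "\<dots> = v z"
    using assms by (auto simp: coord_space_def)
  finally show "v z = (\<Sum>x\<in>I. v x * unit_vec x z)" by simp
qed

lemma coord_linear_add:
  "coord_linear I L \<Longrightarrow> u \<in> coord_space I \<Longrightarrow> v \<in> coord_space I \<Longrightarrow>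
    L (\<lambda>x. u x + v x) = (\<lambda>y. L u y + L v y)"
  by (simp add: coord_linear_def)

lemma coord_linear_scale:
  "coord_linear I L \<Longrightarrow> v \<in> coord_space I \<Longrightarrow> L (\<lambda>x. a * v x) = (\<lambda>y. a * L v y)"
  by (simp add: coord_linear_def)

lemma coord_linear_zero: "coord_linear I L \<Longrightarrow> L (\<lambda>_. 0) = (\<lambda>_. 0)"
  using coord_linear_scale[of I L "\<lambda>_. 0" 0] by (simp add: coord_space_def)

lemma coord_linear_diff:
  assumes "coord_linear I L" "u \<in> coord_space I" "v \<in> coord_space I"
  shows "L (\<lambda>x. u x - v x) = (\<lambda>y. L u y - L v y)"
proof -
  have "L (\<lambda>x. u x + -1 * v x) = (\<lambda>y. L u y + L (\<lambda>x. -1 * v x) y)"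
    by (rule coord_linear_add[OF assms(1,2) coord_space_scale[OF assms(3)]])
  then show ?thesis
    using coord_linear_scale[OF assms(1,3), of "-1"] by simp
qed

lemma coord_linear_sum:
  assumes "coord_linear I L" "finite K" "\<And>k. k \<in> K \<Longrightarrow> u k \<in> coord_space I"
  shows "L (\<lambda>x. \<Sum>k\<in>K. c k * u k x) = (\<lambda>y. \<Sum>k\<in>K. c k * L (u k) y)"
  using assms(2,3)
proof (induction K rule: finite_induct)
  case empty
  then show ?case using coord_linear_zero[OF assms(1)] by simp
next
  case (insert k K)
  have "L (\<lambda>x. \<Sum>k\<in>insert k K. c k * u k x) = L (\<lambda>x. c k * u k x + (\<Sum>k\<in>K. c k * u k x))"
    using insert by simp
  also have "\<dots> = (\<lambda>y. L (\<lambda>x. c k * u k x) y + L (\<lambda>x. \<Sum>k\<in>K. c k * u k x) y)"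
    using insert by (intro coord_linear_add[OF assms(1)] coord_space_scale coord_space_sum) auto
  also have "\<dots> = (\<lambda>y. c k * L (u k) y + L (\<lambda>x. \<Sum>k\<in>K. c k * u k x) y)"
    using insert coord_linear_scale[OF assms(1)] by simp
  finally show ?case using insert by simp
qed

lemma coord_linear_expand:
  assumes "coord_linear I L" "finite I" "v \<in> coord_space I"
  shows "L v = (\<lambda>z. \<Sum>x\<in>I. v x * L (unit_vec x) z)"
proof -
  have "L (\<lambda>z. \<Sum>x\<in>I. v x * unit_vec x z) = (\<lambda>z. \<Sum>x\<in>I. v x * L (unit_vec x) z)"
    by (rule coord_linear_sum[OF assms(1,2) unit_vec_in_coord_space])
  then show ?thesis
    using coord_space_expand[OF assms(2,3)] by simp
qed

lemma coord_linear_subset: "coord_linear I L \<Longrightarrow> I' \<subseteq> I \<Longrightarrow> coord_linear I' L"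
  using coord_space_mono unfolding coord_linear_def by blast

text \<open>A Gauss elimination step with pivot entry \<open>L (unit_vec x) y\<close>: the new map vanishes in
  coordinate \<open>y\<close> and, on vectors supported away from \<open>x\<close>, is still injective.\<close>
definition eliminate_coord :: "(('i \<Rightarrow> 'a::division_ring) \<Rightarrow> ('j \<Rightarrow> 'a)) \<Rightarrow> 'i \<Rightarrow> 'j \<Rightarrow> ('i \<Rightarrow> 'a) \<Rightarrow> ('j \<Rightarrow> 'a)" where
  "eliminate_coord L x y = (\<lambda>v z. L v z - L v y * inverse (L (unit_vec x) y) * L (unit_vec x) z)"

lemma coord_linear_eliminate_coord:
  fixes L :: "('i \<Rightarrow> 'a::division_ring) \<Rightarrow> ('j \<Rightarrow> 'a)"
  assumes "coord_linear I L"
  shows "coord_linear I (eliminate_coord L x y)"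
  unfolding coord_linear_def
proof (intro conjI ballI allI)
  fix u v :: "'i \<Rightarrow> 'a" assume "u \<in> coord_space I" "v \<in> coord_space I"
  then show "eliminate_coord L x y (\<lambda>z. u z + v z) =
      (\<lambda>z. eliminate_coord L x y u z + eliminate_coord L x y v z)"
    using coord_linear_add[OF assms] by (simp add: eliminate_coord_def algebra_simps)
next
  fix a and v :: "'i \<Rightarrow> 'a" assume "v \<in> coord_space I"
  then show "eliminate_coord L x y (\<lambda>z. a * v z) = (\<lambda>z. a * eliminate_coord L x y v z)"
    using coord_linear_scale[OF assms] by (simp add: eliminate_coord_def algebra_simps)
qed

lemma eliminate_coord_image:
  fixes L :: "('i \<Rightarrow> 'a::division_ring) \<Rightarrow> ('j \<Rightarrow> 'a)"
  assumes "L ` coord_space I \<subseteq> coord_space (insert y J)" "x \<in> I" "L (unit_vec x) y \<noteq> 0"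
  shows "eliminate_coord L x y ` coord_space I \<subseteq> coord_space J"
proof -
  have Lx: "L (unit_vec x) \<in> coord_space (insert y J)"
    by (rule subsetD[OF assms(1) imageI[OF unit_vec_in_coord_space[OF assms(2)]]])
  show ?thesis
  proof (rule image_subsetI)
    fix v :: "'i \<Rightarrow> 'a" assume v: "v \<in> coord_space I"
    have Lv: "L v \<in> coord_space (insert y J)"
      using assms(1) v by blast
    have "eliminate_coord L x y v z = 0" if z: "z \<notin> J" for z
    proof (cases "z = y")
      case True
      then show ?thesis
        using assms(3) by (simp add: eliminate_coord_def mult.assoc)
    next
      case False
      then show ?thesis
        using Lv Lx z by (simp add: eliminate_coord_def coord_space_def)
    qed
    then show "eliminate_coord L x y v \<in> coord_space J"
      by (simp add: coord_space_def)
  qed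
qed

lemma eliminate_coord_kernel:
  assumes lin: "coord_linear I L" and ker: "\<forall>v\<in>coord_space I. L v = (\<lambda>_. 0) \<longrightarrow> v = (\<lambda>_. 0)"
    and x: "x \<in> I" and v: "v \<in> coord_space (I - {x})"
    and v0: "eliminate_coord L x y v = (\<lambda>_. 0)"
  shows "v = (\<lambda>_. 0)"
proof -
  define d where "d = L v y * inverse (L (unit_vec x) y)"
  have vI: "v \<in> coord_space I"
    using v by (auto simp: coord_space_def)
  have "L v = (\<lambda>z. d * L (unit_vec x) z)"
  proof
    fix z
    show "L v z = d * L (unit_vec x) z"
      using fun_cong[OF v0, of z] by (simp add: eliminate_coord_def d_def)
  qed
  then have "L (\<lambda>z. v z - d * unit_vec x z) = (\<lambda>_. 0)"
    using coord_linear_diff[OF lin vI coord_space_scale[OF unit_vec_in_coord_space[OF x]]]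
      coord_linear_scale[OF lin unit_vec_in_coord_space[OF x]] by simp
  moreover have "(\<lambda>z. v z - d * unit_vec x z) \<in> coord_space I"
    using vI x by (auto simp: coord_space_def unit_vec_def)
  ultimately have "(\<lambda>z. v z - d * unit_vec x z) = (\<lambda>_. 0)"
    using ker by blast
  then have "v z = d * unit_vec x z" for z
    by (metis right_minus_eq)
  moreover have "v x = 0"
    using v by (simp add: coord_space_def)
  ultimately show ?thesis
    by (auto simp: unit_vec_def)
qed

lemma card_le_if_coord_linear_inj:
  fixes L :: "('i \<Rightarrow> 'a::division_ring) \<Rightarrow> ('j \<Rightarrow> 'a)"
  assumes "finite J" "finite I" "coord_linear I L" "L ` coord_space I \<subseteq> coord_space J"
    "\<forall>v\<in>coord_space I. L v = (\<lambda>_. 0) \<longrightarrow> v = (\<lambda>_. 0)"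
  shows "card I \<le> card J"
  using assms
proof (induction J arbitrary: I L rule: finite_induct)
  case empty
  have "I = {}"
  proof (rule ccontr)
    assume "I \<noteq> {}"
    then obtain x where x: "x \<in> I" by auto
    then have "L (unit_vec x) = (\<lambda>_. 0)"
      using empty.prems(3) unit_vec_in_coord_space[OF x] by (auto simp: coord_space_def)
    then have "unit_vec x x = (0::'a)"
      using empty.prems(4) unit_vec_in_coord_space[OF x] by metis
    then show False by (simp add: unit_vec_def)
  qed
  then show ?case by simp
next
  case (insert y J)
  show ?case
  proof (cases "\<exists>x\<in>I. L (unit_vec x) y \<noteq> 0")
    case True
    then obtain x where x: "x \<in> I" "L (unit_vec x) y \<noteq> 0" by blast
    have "card (I - {x}) \<le> card J"
    proof (rule insert.IH)
      show "coord_linear (I - {x}) (eliminate_coord L x y)"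
        using coord_linear_subset[OF coord_linear_eliminate_coord[OF insert.prems(2)]] by blast
      show "eliminate_coord L x y ` coord_space (I - {x}) \<subseteq> coord_space J"
        using eliminate_coord_image[OF insert.prems(3) x] coord_space_mono[of "I - {x}" I] by blast
      show "\<forall>v\<in>coord_space (I - {x}). eliminate_coord L x y v = (\<lambda>_. 0) \<longrightarrow> v = (\<lambda>_. 0)"
        using eliminate_coord_kernel[OF insert.prems(2,4) x(1)] by blast
    qed (use insert.prems(1) in simp)
    then show ?thesis
      using insert.hyps(1,2) insert.prems(1) x(1) by (simp add: card_Diff_singleton)
  next
    case False
    have "L ` coord_space I \<subseteq> coord_space J"
    proof
      fix w assume "w \<in> L ` coord_space I"
      then obtain v where v: "v \<in> coord_space I" "w = L v" by blast
      have "L v y = 0"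
        using False coord_linear_expand[OF insert.prems(2,1) v(1)] by simp
      then show "w \<in> coord_space J"
        using v insert.prems(3) by (auto simp: coord_space_def)
    qed
    then have "card I \<le> card J"
      using insert.IH insert.prems by blast
    then show ?thesis
      using insert.hyps by simp
  qed
qed

lemma card_le_if_coord_linear_surj:
  fixes L :: "('i \<Rightarrow> 'a::division_ring) \<Rightarrow> ('j \<Rightarrow> 'a)"
  assumes "finite J" "finite I" "coord_linear I L" "coord_space J \<subseteq> L ` coord_space I"
  shows "card J \<le> card I"
proof -
  have "\<forall>y\<in>J. \<exists>u\<in>coord_space I. L u = unit_vec y"
    using assms(4) unit_vec_in_coord_space by (metis imageE subsetD)
  then obtain u where u: "\<And>y. y \<in> J \<Longrightarrow> u y \<in> coord_space I \<and> L (u y) = unit_vec y"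
    by metis
  define G :: "('j \<Rightarrow> 'a) \<Rightarrow> ('i \<Rightarrow> 'a)" where "G = (\<lambda>c x. \<Sum>y\<in>J. c y * u y x)"
  have LG: "L (G c) = c" if "c \<in> coord_space J" for c
  proof -
    have "L (G c) = (\<lambda>z. \<Sum>y\<in>J. c y * L (u y) z)"
      unfolding G_def using u by (intro coord_linear_sum[OF assms(3,1)]) auto
    also have "\<dots> = (\<lambda>z. \<Sum>y\<in>J. c y * unit_vec y z)"
      using u by (intro ext sum.cong) auto
    finally show ?thesis
      using coord_space_expand[OF assms(1) that] by simp
  qed
  show ?thesis
  proof (rule card_le_if_coord_linear_inj[OF assms(2,1)])
    show "coord_linear J G"
      by (simp add: coord_linear_def G_def distrib_right sum.distrib sum_distrib_left mult.assoc)
    show "G ` coord_space J \<subseteq> coord_space I"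
      unfolding G_def using u by (auto intro!: coord_space_sum coord_space_scale)
    show "\<forall>c\<in>coord_space J. G c = (\<lambda>_. 0) \<longrightarrow> c = (\<lambda>_. 0)"
      using LG coord_linear_zero[OF assms(3)] by metis
  qed
qed

definition extend_coord :: "(('i \<Rightarrow> 'a::division_ring) \<Rightarrow> ('j \<Rightarrow> 'a)) \<Rightarrow> ('j \<Rightarrow> 'a) \<Rightarrow> ('i option \<Rightarrow> 'a) \<Rightarrow> ('j \<Rightarrow> 'a)" where
  "extend_coord L w = (\<lambda>v z. L (\<lambda>x. v (Some x)) z + v None * w z)"

lemma coord_space_Some:
  "v \<in> coord_space (insert None (Some ` I)) \<Longrightarrow> (\<lambda>x. v (Some x)) \<in> coord_space I"
  by (auto simp: coord_space_def)

lemma coord_linear_extend_coord: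
  fixes L :: "('i \<Rightarrow> 'a::division_ring) \<Rightarrow> ('j \<Rightarrow> 'a)"
  assumes "coord_linear I L"
  shows "coord_linear (insert None (Some ` I)) (extend_coord L w)"
  unfolding coord_linear_def
proof (intro conjI ballI allI)
  fix u v :: "'i option \<Rightarrow> 'a"
  assume "u \<in> coord_space (insert None (Some ` I))" "v \<in> coord_space (insert None (Some ` I))"
  then show "extend_coord L w (\<lambda>x. u x + v x) = (\<lambda>z. extend_coord L w u z + extend_coord L w v z)"
    using coord_linear_add[OF assms coord_space_Some coord_space_Some]
    by (simp add: extend_coord_def distrib_right add_ac)
next
  fix a and v :: "'i option \<Rightarrow> 'a" assume "v \<in> coord_space (insert None (Some ` I))"
  then show "extend_coord L w (\<lambda>x. a * v x) = (\<lambda>z. a * extend_coord L w v z)"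
    using coord_linear_scale[OF assms coord_space_Some]
    by (simp add: extend_coord_def distrib_left mult.assoc)
qed

lemma extend_coord_image:
  fixes L :: "('i \<Rightarrow> 'a::division_ring) \<Rightarrow> ('j \<Rightarrow> 'a)"
  assumes "L ` coord_space I \<subseteq> coord_space J" "w \<in> coord_space J"
  shows "extend_coord L w ` coord_space (insert None (Some ` I)) \<subseteq> coord_space J"
proof (rule image_subsetI)
  fix v :: "'i option \<Rightarrow> 'a" assume "v \<in> coord_space (insert None (Some ` I))"
  then have "L (\<lambda>x. v (Some x)) \<in> coord_space J"
    using assms(1) coord_space_Some by blast
  then show "extend_coord L w v \<in> coord_space J"
    using assms(2) by (simp add: coord_space_def extend_coord_def)
qed

lemma extend_coord_kernel:
  fixes L :: "('i \<Rightarrow> 'a::division_ring) \<Rightarrow> ('j \<Rightarrow> 'a)"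
  assumes lin: "coord_linear I L" and ker: "\<forall>v\<in>coord_space I. L v = (\<lambda>_. 0) \<longrightarrow> v = (\<lambda>_. 0)"
    and w: "w \<notin> L ` coord_space I" and v: "v \<in> coord_space (insert None (Some ` I))"
    and v0: "extend_coord L w v = (\<lambda>_. 0)"
  shows "v = (\<lambda>_. 0)"
proof -
  let ?v' = "\<lambda>x. v (Some x)"
  have "v None = 0"
  proof (rule ccontr)
    assume nz: "v None \<noteq> 0"
    have "w z = - inverse (v None) * L ?v' z" for z
    proof -
      have "v None * w z = - L ?v' z"
        using fun_cong[OF v0, of z] by (simp add: extend_coord_def add_eq_0_iff2)
      then have "inverse (v None) * (v None * w z) = - inverse (v None) * L ?v' z"
        by simp
      then show ?thesis
        using nz by (simp add: mult.assoc[symmetric])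
    qed
    then have "w = (\<lambda>z. - inverse (v None) * L ?v' z)"
      by blast
    also have "\<dots> = L (\<lambda>x. - inverse (v None) * ?v' x)"
      by (rule coord_linear_scale[OF lin coord_space_Some[OF v], symmetric])
    finally show False
      using w coord_space_scale[OF coord_space_Some[OF v]] by blast
  qed
  moreover have "?v' = (\<lambda>_. 0)"
    using v0 \<open>v None = 0\<close> ker coord_space_Some[OF v] by (simp add: extend_coord_def)
  ultimately show ?thesis
    by (metis not_None_eq)
qed

lemma coord_linear_surj_if_inj:
  fixes L :: "('i \<Rightarrow> 'a::division_ring) \<Rightarrow> ('j \<Rightarrow> 'a)"
  assumes "finite J" "finite I" "card J \<le> card I" "coord_linear I L"
    "L ` coord_space I \<subseteq> coord_space J"
    "\<forall>v\<in>coord_space I. L v = (\<lambda>_. 0) \<longrightarrow> v = (\<lambda>_. 0)"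
  shows "coord_space J \<subseteq> L ` coord_space I"
proof
  fix w :: "'j \<Rightarrow> 'a" assume w: "w \<in> coord_space J"
  show "w \<in> L ` coord_space I"
  proof (rule ccontr)
    assume w': "w \<notin> L ` coord_space I"
    have "card (insert None (Some ` I)) \<le> card J"
    proof (rule card_le_if_coord_linear_inj[OF assms(1)])
      show "finite (insert None (Some ` I))"
        using assms(2) by simp
      show "coord_linear (insert None (Some ` I)) (extend_coord L w)"
        by (rule coord_linear_extend_coord[OF assms(4)])
      show "extend_coord L w ` coord_space (insert None (Some ` I)) \<subseteq> coord_space J"
        by (rule extend_coord_image[OF assms(5) w])
      show "\<forall>v\<in>coord_space (insert None (Some ` I)). extend_coord L w v = (\<lambda>_. 0) \<longrightarrow> v = (\<lambda>_. 0)"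
        using extend_coord_kernel[OF assms(4,6) w'] by blast
    qed
    then show False
      using assms(2,3) by (simp add: card_image)
  qed
qed

lemma coord_linear_image_eq_iff_card_eq:
  fixes L :: "('i \<Rightarrow> 'a::division_ring) \<Rightarrow> ('j \<Rightarrow> 'a)"
  assumes "finite I" "finite J" "coord_linear I L" "L ` coord_space I \<subseteq> coord_space J"
    "\<forall>v\<in>coord_space I. L v = (\<lambda>_. 0) \<longrightarrow> v = (\<lambda>_. 0)"
  shows "L ` coord_space I = coord_space J \<longleftrightarrow> card I = card J"
  using card_le_if_coord_linear_inj[OF assms(2,1,3-5)]
    card_le_if_coord_linear_surj[OF assms(2,1,3)]
    coord_linear_surj_if_inj[OF assms(2,1) _ assms(3-5)] assms(4)
  by (metis dual_order.antisym subset_antisym)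

section \<open>Polynomials of bounded degree as a coordinate space\<close>

lemma coeff_lsmult [simp]: "coeff (lsmult a p) n = a * coeff p n"
  by (simp add: lsmult_def coeff_map_poly)

lemma lsmult_add: "lsmult a (p + q) = lsmult a p + lsmult a q"
  by (rule poly_eqI) (simp add: distrib_left)

lemma lsmult_add_left: "lsmult (a + b) p = lsmult a p + lsmult b p"
  by (rule poly_eqI) (simp add: distrib_right)

lemma lsmult_lsmult: "lsmult a (lsmult b p) = lsmult (a * b) p"
  by (rule poly_eqI) (simp add: mult.assoc)

lemma lsmult_sum: "lsmult a (\<Sum>k\<in>K. f k) = (\<Sum>k\<in>K. lsmult a (f k))"
  by (rule poly_eqI) (simp add: coeff_sum sum_distrib_left)

lemma lsmult_0_left [simp]: "lsmult 0 p = 0"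
  by (rule poly_eqI) simp

lemma lsmult_0_right [simp]: "lsmult a 0 = 0"
  by (rule poly_eqI) simp

lemma degree_lsmult_le: "degree (lsmult a p) \<le> degree p"
  by (rule degree_le) (simp add: coeff_eq_0)

lemma deg_less_iff: "F \<in> deg_less d \<longleftrightarrow> (\<forall>n\<ge>d. coeff F n = 0)"
proof
  assume "\<forall>n\<ge>d. coeff F n = 0"
  then have "F \<noteq> 0 \<Longrightarrow> degree F < d"
    by (meson leading_coeff_0_iff not_le)
  then show "F \<in> deg_less d"
    by (auto simp: deg_less_def)
qed (auto simp: deg_less_def coeff_eq_0)

lemma deg_less_add: "F \<in> deg_less d \<Longrightarrow> G \<in> deg_less d \<Longrightarrow> F + G \<in> deg_less d"
  by (simp add: deg_less_iff)

lemma deg_less_diff: "F \<in> deg_less d \<Longrightarrow> G \<in> deg_less d \<Longrightarrow> F - G \<in> deg_less d"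
  by (simp add: deg_less_iff)

lemma deg_less_lsmult: "F \<in> deg_less d \<Longrightarrow> lsmult a F \<in> deg_less d"
  by (simp add: deg_less_iff)

lemma zero_in_deg_less [simp]: "0 \<in> deg_less d"
  by (simp add: deg_less_def)

definition poly_of_coords :: "nat \<Rightarrow> (nat \<Rightarrow> 'a::zero) \<Rightarrow> 'a poly" where
  "poly_of_coords N v = Poly (map v [0..<N])"

lemma coeff_poly_of_coords: "coeff (poly_of_coords N v) k = (if k < N then v k else 0)"
  by (simp add: poly_of_coords_def nth_default_nth nth_default_beyond)

lemma bij_betw_poly_of_coords: "bij_betw (poly_of_coords N) (coord_space {..<N}) (deg_less N)"
proof (rule bij_betwI')
  fix u v :: "nat \<Rightarrow> 'a" assume "u \<in> coord_space {..<N}" "v \<in> coord_space {..<N}"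
  then show "poly_of_coords N u = poly_of_coords N v \<longleftrightarrow> u = v"
    by (auto simp: poly_eq_iff fun_eq_iff coeff_poly_of_coords coord_space_def) (metis not_le)
next
  fix F :: "'a poly" assume "F \<in> deg_less N"
  then have "coeff F \<in> coord_space {..<N}" "F = poly_of_coords N (coeff F)"
    by (auto simp: deg_less_iff coord_space_def poly_eq_iff coeff_poly_of_coords)
  then show "\<exists>v\<in>coord_space {..<N}. F = poly_of_coords N v"
    by blast
qed (simp add: deg_less_iff coeff_poly_of_coords)

definition family_coords :: "(nat \<Rightarrow> nat) \<Rightarrow> nat \<Rightarrow> (nat \<Rightarrow> 'a poly) \<Rightarrow> nat \<times> nat \<Rightarrow> 'a::zero" where
  "family_coords d n T = (\<lambda>(i, j). if i < n \<and> j < d i then coeff (T i) j else 0)"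

lemma bij_betw_family_coords:
  "bij_betw (family_coords d n) (\<Pi>\<^sub>E i\<in>{..<n}. deg_less (d i)) (coord_space (SIGMA i:{..<n}. {..<d i}))"
proof (rule bij_betwI')
  fix T S :: "nat \<Rightarrow> 'a::zero poly" assume T: "T \<in> (\<Pi>\<^sub>E i\<in>{..<n}. deg_less (d i))" and S: "S \<in> (\<Pi>\<^sub>E i\<in>{..<n}. deg_less (d i))"
  have "T i = S i" if "family_coords d n T = family_coords d n S" for i
  proof (cases "i < n")
    case True
    then have "T i \<in> deg_less (d i)" "S i \<in> deg_less (d i)"
      using T S by auto
    then have "coeff (T i) j = coeff (S i) j" for j
      using fun_cong[OF that, of "(i, j)"] True
      by (cases "j < d i") (auto simp: family_coords_def deg_less_iff)
    then show ?thesis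
      by (simp add: poly_eq_iff)
  next
    case False
    then show ?thesis
      using PiE_arb[OF T] PiE_arb[OF S] by (metis lessThan_iff)
  qed
  then show "family_coords d n T = family_coords d n S \<longleftrightarrow> T = S"
    by auto
next
  fix c assume c: "c \<in> coord_space (SIGMA i:{..<n}. {..<d i})"
  define T where "T = (\<lambda>i\<in>{..<n}. poly_of_coords (d i) (\<lambda>j. c (i, j)))"
  have "T \<in> (\<Pi>\<^sub>E i\<in>{..<n}. deg_less (d i))"
    by (simp add: T_def deg_less_iff coeff_poly_of_coords)
  moreover have "c = family_coords d n T"
    using c by (auto simp: fun_eq_iff family_coords_def T_def coeff_poly_of_coords coord_space_def)
  ultimately show "\<exists>T\<in>\<Pi>\<^sub>E i\<in>{..<n}. deg_less (d i). c = family_coords d n T"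
    by blast
qed (auto simp: coord_space_def family_coords_def)

lemma coord_linear_family_coords_comp:
  fixes f :: "'a::division_ring poly \<Rightarrow> nat \<Rightarrow> 'a poly"
  assumes "left_linear_on (deg_less N) n f"
  shows "coord_linear {..<N} (family_coords d n \<circ> f \<circ> poly_of_coords N)"
proof -
  have P: "poly_of_coords N v \<in> deg_less N" for v :: "nat \<Rightarrow> 'a"
    by (simp add: deg_less_iff coeff_poly_of_coords)
  have "poly_of_coords N (\<lambda>x. u x + v x) = poly_of_coords N u + poly_of_coords N v"
    "poly_of_coords N (\<lambda>x. a * v x) = lsmult a (poly_of_coords N v)" for u v :: "nat \<Rightarrow> 'a" and a
    by (simp_all add: poly_eq_iff coeff_poly_of_coords)
  then show ?thesis
    using assms P unfolding coord_linear_def left_linear_on_def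
    by (auto simp: fun_eq_iff family_coords_def distrib_left)
qed

lemma left_linear_image_eq_PiE_iff:
  fixes f :: "'a::division_ring poly \<Rightarrow> nat \<Rightarrow> 'a poly"
  assumes lin: "left_linear_on (deg_less N) n f" and inj: "inj_on f (deg_less N)"
    and into: "f ` deg_less N \<subseteq> (\<Pi>\<^sub>E i\<in>{..<n}. deg_less (d i))"
  shows "f ` deg_less N = (\<Pi>\<^sub>E i\<in>{..<n}. deg_less (d i)) \<longleftrightarrow> N = (\<Sum>i<n. d i)"
proof -
  let ?T = "\<Pi>\<^sub>E i\<in>{..<n}. deg_less (d i)" and ?J = "SIGMA i:{..<n}. {..<d i}"
  define L where "L = family_coords d n \<circ> f \<circ> poly_of_coords N"
  note P = bij_betw_poly_of_coords[of N] and C = bij_betw_family_coords[of d n]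
  have image: "L ` coord_space {..<N} = family_coords d n ` f ` deg_less N"
    unfolding L_def image_comp[symmetric] bij_betw_imp_surj_on[OF P] ..
  have inj_L: "inj_on L (coord_space {..<N})"
    unfolding L_def using P C inj into
    by (auto simp: bij_betw_def intro!: comp_inj_on intro: inj_on_subset)
  have lin_L: "coord_linear {..<N} L"
    unfolding L_def by (rule coord_linear_family_coords_comp[OF lin])
  have "(\<lambda>_. 0) \<in> coord_space {..<N}"
    by (simp add: coord_space_def)
  then have "\<forall>v\<in>coord_space {..<N}. L v = (\<lambda>_. 0) \<longrightarrow> v = (\<lambda>_. 0)"
    using inj_onD[OF inj_L] coord_linear_zero[OF lin_L] by metis
  moreover have "L ` coord_space {..<N} \<subseteq> coord_space ?J"
    unfolding image bij_betw_imp_surj_on[OF C, symmetric] using into by (rule image_mono)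
  ultimately have "L ` coord_space {..<N} = coord_space ?J \<longleftrightarrow> card {..<N} = card ?J"
    by (intro coord_linear_image_eq_iff_card_eq[OF _ _ lin_L]) auto
  moreover have "family_coords d n ` f ` deg_less N = coord_space ?J \<longleftrightarrow> f ` deg_less N = ?T"
    unfolding bij_betw_imp_surj_on[OF C, symmetric]
    using bij_betw_imp_inj_on[OF C] into by (rule inj_on_image_eq_iff) simp
  ultimately show ?thesis
    using image by (simp add: card_SigmaI)
qed

section \<open>Skew polynomials\<close>

lemma xshift_Suc: "xshift (Suc j) p = pCons 0 (xshift j p)"
  by (simp add: xshift_def)

lemma xshift_const: "xshift j [:b:] = monom b j"
proof -
  have "coeff (xshift j p) n = (if n < j then 0 else coeff p (n - j))" for p :: "'a poly" and n
    by (induction j arbitrary: n) (auto simp: xshift_def coeff_pCons split: nat.splits)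
  then show ?thesis
    by (intro poly_eqI) (auto simp: coeff_pCons split: nat.splits)
qed

locale skew_poly_ring =
  fixes \<sigma> \<delta> :: "'a::division_ring \<Rightarrow> 'a"
  assumes ring_endo: "ring_endo \<sigma>" and sigma_derivation: "sigma_derivation \<sigma> \<delta>"
begin

abbreviation skew_times :: "'a poly \<Rightarrow> 'a poly \<Rightarrow> 'a poly" (infixl "\<star>" 70) where
  "F \<star> G \<equiv> skew_mult \<sigma> \<delta> F G"

lemma sigma_add: "\<sigma> (a + b) = \<sigma> a + \<sigma> b"
  using ring_endo by (simp add: ring_endo_def)

lemma sigma_mult: "\<sigma> (a * b) = \<sigma> a * \<sigma> b"
  using ring_endo by (simp add: ring_endo_def)

lemma sigma_0 [simp]: "\<sigma> 0 = 0"
  using sigma_add[of 0 0] by simp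

lemma delta_add: "\<delta> (a + b) = \<delta> a + \<delta> b"
  using sigma_derivation by (simp add: sigma_derivation_def)

lemma delta_mult: "\<delta> (a * b) = \<sigma> a * \<delta> b + \<delta> a * b"
  using sigma_derivation by (simp add: sigma_derivation_def)

lemma delta_0 [simp]: "\<delta> 0 = 0"
  using delta_add[of 0 0] by simp

lemma sigma_funpow_eq_0_iff [simp]: "(\<sigma> ^^ i) a = 0 \<longleftrightarrow> a = 0"
proof -
  have step: "\<sigma> b \<noteq> 0" if "b \<noteq> 0" for b
  proof -
    have "\<sigma> b * \<sigma> (inverse b) = 1"
      using sigma_mult[of b "inverse b"] ring_endo that by (simp add: ring_endo_def)
    then show ?thesis
      by auto
  qed
  have "(\<sigma> ^^ i) a \<noteq> 0" if "a \<noteq> 0"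
    using that by (induction i) (simp_all add: step)
  moreover have "(\<sigma> ^^ i) 0 = 0"
    by (induction i) simp_all
  ultimately show ?thesis
    by blast
qed

text \<open>Left multiplication by \<open>x\<close>, from \<open>x a = \<sigma>(a) x + \<delta>(a)\<close>.\<close>
definition xmul :: "'a poly \<Rightarrow> 'a poly" where
  "xmul G = pCons 0 (map_poly \<sigma> G) + map_poly \<delta> G"

lemma coeff_xmul:
  "coeff (xmul G) n = (case n of 0 \<Rightarrow> 0 | Suc m \<Rightarrow> \<sigma> (coeff G m)) + \<delta> (coeff G n)"
  by (simp add: xmul_def coeff_pCons coeff_map_poly split: nat.splits)

lemma xmul_add: "xmul (G + H) = xmul G + xmul H"
  by (rule poly_eqI) (simp add: coeff_xmul sigma_add delta_add split: nat.splits)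

lemma xmul_0 [simp]: "xmul 0 = 0"
  by (rule poly_eqI) (simp add: coeff_xmul split: nat.splits)

lemma xmul_pow_0 [simp]: "(xmul ^^ i) 0 = 0"
  by (induction i) simp_all

lemma xmul_sum: "xmul (\<Sum>k\<in>K. f k) = (\<Sum>k\<in>K. xmul (f k))"
  by (induction K rule: infinite_finite_induct) (auto simp: xmul_add)

lemma xmul_pow_sum: "(xmul ^^ i) (\<Sum>k\<in>K. f k) = (\<Sum>k\<in>K. (xmul ^^ i) (f k))"
  by (induction i) (auto simp: xmul_sum)

lemma xmul_lsmult: "xmul (lsmult a G) = lsmult (\<sigma> a) (xmul G) + lsmult (\<delta> a) G"
  by (rule poly_eqI)
    (simp add: coeff_xmul sigma_mult delta_mult distrib_left add.assoc split: nat.splits)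

lemma xmul_pow_xshift: "(xmul ^^ i) (xshift j p) = xshift j ((xmul ^^ i) p)"
proof -
  have "xmul (pCons 0 p) = pCons 0 (xmul p)" for p
    by (rule poly_eqI) (simp add: coeff_xmul coeff_pCons split: nat.splits)
  then have "xmul (xshift j p) = xshift j (xmul p)" for p
    by (induction j) (auto simp: xshift_Suc xshift_def)
  then show ?thesis
    by (induction i) auto
qed

lemma xpow_mul_eq: "xpow_mul \<sigma> \<delta> i b = (xmul ^^ i) [:b:]"
  by (induction i) (auto simp: xmul_def)

lemma skew_mult_altdef: "F \<star> G = (\<Sum>i\<le>degree F. lsmult (coeff F i) ((xmul ^^ i) G))"
proof -
  have "F \<star> G = (\<Sum>i\<le>degree F. lsmult (coeff F i)
      (\<Sum>j\<le>degree G. xshift j ((xmul ^^ i) [:coeff G j:])))"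
    by (simp add: skew_mult_def lsmult_sum xpow_mul_eq)
  also have "\<dots> = (\<Sum>i\<le>degree F. lsmult (coeff F i)
      ((xmul ^^ i) (\<Sum>j\<le>degree G. xshift j [:coeff G j:])))"
    by (simp add: xmul_pow_sum xmul_pow_xshift)
  finally show ?thesis
    by (simp add: xshift_const poly_as_sum_of_monoms)
qed

lemma skew_mult_eq_sum_atMost:
  assumes "degree F \<le> d"
  shows "F \<star> G = (\<Sum>i\<le>d. lsmult (coeff F i) ((xmul ^^ i) G))"
proof -
  have "(\<Sum>i\<in>{..d} - {..degree F}. lsmult (coeff F i) ((xmul ^^ i) G)) = 0"
    by (rule sum.neutral) (auto simp: coeff_eq_0)
  then show ?thesis
    using assms by (simp add: skew_mult_altdef sum.subset_diff[of "{..degree F}" "{..d}"])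
qed

lemma skew_mult_add_left: "(F + G) \<star> H = F \<star> H + G \<star> H"
proof -
  define d where "d = max (degree F) (degree G)"
  have "degree (F + G) \<le> d" "degree F \<le> d" "degree G \<le> d"
    using degree_add_le_max[of F G] by (auto simp: d_def)
  then show ?thesis
    by (simp add: skew_mult_eq_sum_atMost lsmult_add_left sum.distrib)
qed

lemma skew_mult_0_left [simp]: "0 \<star> H = 0"
  by (simp add: skew_mult_altdef)

lemma skew_mult_diff_left: "(F - G) \<star> H = F \<star> H - G \<star> H"
  by (metis add_diff_cancel diff_add_cancel skew_mult_add_left)

lemma skew_mult_sum_left: "(\<Sum>k\<in>K. f k) \<star> H = (\<Sum>k\<in>K. f k \<star> H)"
  by (induction K rule: infinite_finite_induct) (auto simp: skew_mult_add_left)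

lemma skew_mult_lsmult_left: "lsmult a F \<star> H = lsmult a (F \<star> H)"
  by (simp add: skew_mult_eq_sum_atMost[OF degree_lsmult_le] skew_mult_altdef[of F]
      lsmult_sum lsmult_lsmult)

lemma skew_mult_xmul_left: "xmul K \<star> H = xmul (K \<star> H)"
proof -
  have "pCons 0 P \<star> H = P \<star> xmul H" for P
  proof -
    have "pCons 0 P \<star> H = (\<Sum>i\<le>Suc (degree P). lsmult (coeff (pCons 0 P) i) ((xmul ^^ i) H))"
      by (rule skew_mult_eq_sum_atMost[OF degree_pCons_le])
    also have "\<dots> = (\<Sum>i\<le>degree P. lsmult (coeff P i) ((xmul ^^ i) (xmul H)))"
      by (subst sum.atMost_Suc_shift) (simp add: funpow_Suc_right del: funpow.simps)
    finally show ?thesis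
      by (simp add: skew_mult_altdef)
  qed
  then have "xmul K \<star> H = map_poly \<sigma> K \<star> xmul H + map_poly \<delta> K \<star> H"
    by (simp add: xmul_def skew_mult_add_left)
  also have "\<dots> = (\<Sum>i\<le>degree K. lsmult (\<sigma> (coeff K i)) ((xmul ^^ i) (xmul H))) +
                  (\<Sum>i\<le>degree K. lsmult (\<delta> (coeff K i)) ((xmul ^^ i) H))"
    by (simp add: skew_mult_eq_sum_atMost[OF map_poly_degree_leq] coeff_map_poly)
  also have "\<dots> = xmul (K \<star> H)"
    by (simp add: skew_mult_altdef[of K] xmul_sum xmul_lsmult sum.distrib funpow_swap1)
  finally show ?thesis .
qed

lemma skew_mult_assoc: "(F \<star> G) \<star> H = F \<star> (G \<star> H)"
proof -
  have "(xmul ^^ i) K \<star> H = (xmul ^^ i) (K \<star> H)" for i K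
    by (induction i) (auto simp: skew_mult_xmul_left)
  then show ?thesis
    by (simp add: skew_mult_altdef[of F] skew_mult_sum_left skew_mult_lsmult_left)
qed

lemma degree_xmul_pow:
  assumes "G \<noteq> 0"
  shows "degree ((xmul ^^ i) G) = degree G + i \<and> lead_coeff ((xmul ^^ i) G) = (\<sigma> ^^ i) (lead_coeff G)"
proof (induction i)
  case (Suc i)
  define K where "K = (xmul ^^ i) G"
  have K: "degree K = degree G + i" "lead_coeff K = (\<sigma> ^^ i) (lead_coeff G)"
    using Suc[folded K_def] by blast+
  have top: "coeff (xmul K) (Suc (degree K)) = \<sigma> (lead_coeff K)"
    by (simp add: coeff_xmul coeff_eq_0)
  have "degree (xmul K) \<le> Suc (degree K)"
    by (rule degree_le) (auto simp: coeff_xmul coeff_eq_0 split: nat.splits)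
  moreover have "\<sigma> (lead_coeff K) \<noteq> 0"
    using K(2) assms sigma_funpow_eq_0_iff[of "Suc i"] by simp
  ultimately have "degree (xmul K) = Suc (degree K)"
    using top le_degree[of "xmul K" "Suc (degree K)"] by simp
  then show ?case
    using top K by (simp add: K_def)
qed simp

lemma coeff_skew_mult_high:
  assumes "G \<noteq> 0" "degree F + degree G \<le> n"
  shows "coeff (F \<star> G) n = lead_coeff F * coeff ((xmul ^^ degree F) G) n"
proof -
  have "coeff (F \<star> G) n = (\<Sum>i\<le>degree F. coeff F i * coeff ((xmul ^^ i) G) n)"
    by (simp add: skew_mult_altdef coeff_sum)
  also have "\<dots> = (\<Sum>i\<in>{degree F}. coeff F i * coeff ((xmul ^^ i) G) n)"
  proof (rule sum.mono_neutral_right)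
    show "\<forall>i\<in>{..degree F} - {degree F}. coeff F i * coeff ((xmul ^^ i) G) n = 0"
      using assms degree_xmul_pow[OF assms(1)] by (auto simp: coeff_eq_0)
  qed auto
  finally show ?thesis by simp
qed

lemma degree_skew_mult:
  assumes "F \<noteq> 0" "G \<noteq> 0"
  shows "degree (F \<star> G) = degree F + degree G"
    and "lead_coeff (F \<star> G) = lead_coeff F * (\<sigma> ^^ degree F) (lead_coeff G)"
proof -
  have dX: "degree ((xmul ^^ degree F) G) = degree F + degree G"
    and lX: "lead_coeff ((xmul ^^ degree F) G) = (\<sigma> ^^ degree F) (lead_coeff G)"
    using degree_xmul_pow[OF assms(2), of "degree F"] by (metis add.commute)+
  have top: "coeff (F \<star> G) (degree F + degree G) = lead_coeff F * (\<sigma> ^^ degree F) (lead_coeff G)"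
    using coeff_skew_mult_high[OF assms(2) order_refl] by (metis dX lX)
  have "degree (F \<star> G) \<le> degree F + degree G"
    by (rule degree_le) (auto simp: coeff_skew_mult_high[OF assms(2)] coeff_eq_0 dX)
  moreover have "lead_coeff F * (\<sigma> ^^ degree F) (lead_coeff G) \<noteq> 0"
    using assms by simp
  ultimately show "degree (F \<star> G) = degree F + degree G"
    using top le_degree by (metis le_antisym)
  with top show "lead_coeff (F \<star> G) = lead_coeff F * (\<sigma> ^^ degree F) (lead_coeff G)"
    by simp
qed

lemma skew_mult_eq_0_iff: "F \<star> G = 0 \<longleftrightarrow> F = 0 \<or> G = 0"
proof -
  have "F \<star> G \<noteq> 0" if "F \<noteq> 0" "G \<noteq> 0"
    using degree_skew_mult(2)[OF that] that by auto
  moreover have "F \<star> 0 = 0"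
    by (simp add: skew_mult_altdef)
  ultimately show ?thesis
    by auto
qed

lemma skew_division_exists:
  assumes "P \<noteq> 0"
  shows "\<exists>Q R. F = Q \<star> P + R \<and> R \<in> deg_less (degree P)"
proof (induction "degree F" arbitrary: F rule: less_induct)
  case less
  show ?case
  proof (cases "F \<in> deg_less (degree P)")
    case True
    then show ?thesis
      by (metis add_0 skew_mult_0_left)
  next
    case False
    then have F: "F \<noteq> 0" "degree P \<le> degree F"
      by (auto simp: deg_less_def)
    define k where "k = degree F - degree P"
    text \<open>The monomial \<open>a x\<^sup>k\<close> times \<open>P\<close> has the same leading term as \<open>F\<close>.\<close>
    define a where "a = lead_coeff F * inverse ((\<sigma> ^^ k) (lead_coeff P))"
    have "a \<noteq> 0"
      using F assms by (simp add: a_def)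
    then have S: "degree (monom a k \<star> P) = degree F" "lead_coeff (monom a k \<star> P) = lead_coeff F"
      using degree_skew_mult[of "monom a k" P] F assms
      by (simp_all add: degree_monom_eq k_def a_def mult.assoc)
    define D where "D = F - monom a k \<star> P"
    have "degree D \<le> degree F" "coeff D (degree F) = 0"
      using S degree_diff_le_max[of F "monom a k \<star> P"] by (simp_all add: D_def)
    then have "D = 0 \<or> degree D < degree F"
      by (metis le_neq_implies_less leading_coeff_0_iff)
    then obtain Q R where "D = Q \<star> P + R" "R \<in> deg_less (degree P)"
      using less.hyps by (metis add_0 skew_mult_0_left zero_in_deg_less)
    then have "F = (Q + monom a k) \<star> P + R" "R \<in> deg_less (degree P)"
      by (simp_all add: D_def skew_mult_add_left algebra_simps)
    then show ?thesis
      by blast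
  qed
qed

lemma skew_division_unique:
  assumes "P \<noteq> 0" "Q \<star> P + R = Q' \<star> P + R'"
    and "R \<in> deg_less (degree P)" "R' \<in> deg_less (degree P)"
  shows "Q = Q'" "R = R'"
proof -
  have eq: "(Q - Q') \<star> P = R' - R"
    using assms(2) by (simp add: skew_mult_diff_left algebra_simps)
  show "Q = Q'"
  proof (rule ccontr)
    assume "Q \<noteq> Q'"
    then have "degree P \<le> degree ((Q - Q') \<star> P)" "(Q - Q') \<star> P \<noteq> 0"
      using degree_skew_mult(1)[of "Q - Q'" P] assms(1) skew_mult_eq_0_iff by auto
    then show False
      using deg_less_diff[OF assms(4,3)] eq by (simp add: deg_less_def)
  qed
  with assms(2) show "R = R'"
    by simp
qed

lemma skew_rem_eqI:
  assumes "P \<noteq> 0" "F = Q \<star> P + R" "R \<in> deg_less (degree P)"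
  shows "skew_rem \<sigma> \<delta> F P = R"
  unfolding skew_rem_def
proof (rule the_equality)
  fix R' assume "R' \<in> deg_less (degree P) \<and> (\<exists>Q. F = Q \<star> P + R')"
  then show "R' = R"
    using skew_division_unique(2)[OF assms(1)] assms(2,3) by metis
qed (use assms in blast)

lemma skew_rem_in_deg_less: "P \<noteq> 0 \<Longrightarrow> skew_rem \<sigma> \<delta> F P \<in> deg_less (degree P)"
  using skew_division_exists skew_rem_eqI by metis

lemma skew_rem_decomp: "P \<noteq> 0 \<Longrightarrow> \<exists>Q. F = Q \<star> P + skew_rem \<sigma> \<delta> F P"
  using skew_division_exists skew_rem_eqI by metis

lemma skew_rem_add:
  assumes "P \<noteq> 0"
  shows "skew_rem \<sigma> \<delta> (F + G) P = skew_rem \<sigma> \<delta> F P + skew_rem \<sigma> \<delta> G P"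
proof -
  obtain Q1 Q2 where "F = Q1 \<star> P + skew_rem \<sigma> \<delta> F P" "G = Q2 \<star> P + skew_rem \<sigma> \<delta> G P"
    using skew_rem_decomp[OF assms] by metis
  then have "F + G = (Q1 + Q2) \<star> P + (skew_rem \<sigma> \<delta> F P + skew_rem \<sigma> \<delta> G P)"
    by (simp add: skew_mult_add_left algebra_simps)
  then show ?thesis
    by (rule skew_rem_eqI[OF assms]) (intro deg_less_add skew_rem_in_deg_less[OF assms])
qed

lemma skew_rem_lsmult:
  assumes "P \<noteq> 0"
  shows "skew_rem \<sigma> \<delta> (lsmult a F) P = lsmult a (skew_rem \<sigma> \<delta> F P)"
proof -
  obtain Q where "F = Q \<star> P + skew_rem \<sigma> \<delta> F P"
    using skew_rem_decomp[OF assms] by metis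
  then have "lsmult a F = lsmult a Q \<star> P + lsmult a (skew_rem \<sigma> \<delta> F P)"
    by (metis skew_mult_lsmult_left lsmult_add)
  then show ?thesis
    by (rule skew_rem_eqI[OF assms]) (intro deg_less_lsmult skew_rem_in_deg_less[OF assms])
qed

lemma skew_rem_eq_iff:
  assumes "P \<noteq> 0"
  shows "skew_rem \<sigma> \<delta> F P = skew_rem \<sigma> \<delta> G P \<longleftrightarrow> (\<exists>Q. F - G = Q \<star> P)"
proof -
  have "skew_rem \<sigma> \<delta> F P = skew_rem \<sigma> \<delta> (F - G) P + skew_rem \<sigma> \<delta> G P"
    using skew_rem_add[OF assms, of "F - G" G] by simp
  moreover have "skew_rem \<sigma> \<delta> (F - G) P = 0 \<longleftrightarrow> (\<exists>Q. F - G = Q \<star> P)"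
  proof
    assume "skew_rem \<sigma> \<delta> (F - G) P = 0"
    then show "\<exists>Q. F - G = Q \<star> P"
      using skew_rem_decomp[OF assms, of "F - G"] by simp
  next
    assume "\<exists>Q. F - G = Q \<star> P"
    then obtain Q where "F - G = Q \<star> P + 0"
      by auto
    then show "skew_rem \<sigma> \<delta> (F - G) P = 0"
      by (rule skew_rem_eqI[OF assms _ zero_in_deg_less])
  qed
  ultimately show ?thesis
    by (metis add_cancel_right_left add_right_cancel)
qed

lemma mem_skew_I_iff: "F \<in> skew_I \<sigma> \<delta> \<Omega> \<longleftrightarrow> (\<forall>P\<in>\<Omega>. \<exists>Q. F = Q \<star> P)"
  by (simp add: skew_I_def)

lemma skew_I_diff: "F \<in> skew_I \<sigma> \<delta> \<Omega> \<Longrightarrow> G \<in> skew_I \<sigma> \<delta> \<Omega> \<Longrightarrow> F - G \<in> skew_I \<sigma> \<delta> \<Omega>"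
  by (simp add: mem_skew_I_iff) (metis skew_mult_diff_left)

lemma skew_I_lsmult: "F \<in> skew_I \<sigma> \<delta> \<Omega> \<Longrightarrow> lsmult a F \<in> skew_I \<sigma> \<delta> \<Omega>"
  by (simp add: mem_skew_I_iff) (metis skew_mult_lsmult_left)

lemma skew_I_mult_left: "F \<in> skew_I \<sigma> \<delta> \<Omega> \<Longrightarrow> Q \<star> F \<in> skew_I \<sigma> \<delta> \<Omega>"
  by (simp add: mem_skew_I_iff) (metis skew_mult_assoc)

lemma skew_F_minimal:
  assumes "skew_I \<sigma> \<delta> \<Omega> \<noteq> {0}"
  shows "skew_F \<sigma> \<delta> \<Omega> \<in> skew_I \<sigma> \<delta> \<Omega>" "skew_F \<sigma> \<delta> \<Omega> \<noteq> 0"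
    and "\<And>G. G \<in> skew_I \<sigma> \<delta> \<Omega> \<Longrightarrow> G \<noteq> 0 \<Longrightarrow> degree (skew_F \<sigma> \<delta> \<Omega>) \<le> degree G"
proof -
  let ?I = "skew_I \<sigma> \<delta> \<Omega>"
  let ?min = "\<lambda>F. F \<in> ?I \<and> F \<noteq> 0 \<and> lead_coeff F = 1 \<and> (\<forall>G\<in>?I. G \<noteq> 0 \<longrightarrow> degree F \<le> degree G)"
  have "\<exists>G. G \<in> ?I \<and> G \<noteq> 0"
    using assms by (metis empty_iff insertI1 mem_skew_I_iff skew_mult_0_left subsetI subset_singletonD)
  then obtain G0 where G0: "G0 \<in> ?I" "G0 \<noteq> 0" "\<And>G. G \<in> ?I \<Longrightarrow> G \<noteq> 0 \<Longrightarrow> degree G0 \<le> degree G"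
    using ex_has_least_nat[of "\<lambda>G. G \<in> ?I \<and> G \<noteq> 0" _ degree] by metis
  define F0 where "F0 = lsmult (inverse (lead_coeff G0)) G0"
  have "coeff F0 (degree G0) = 1"
    using G0(2) by (simp add: F0_def)
  moreover have "degree F0 \<le> degree G0"
    by (simp add: F0_def degree_lsmult_le)
  ultimately have F0: "?min F0"
    using G0 skew_I_lsmult le_degree[of F0 "degree G0"] by (fastforce simp: F0_def)
  have uniq: "F1 = F0" if F1: "?min F1" for F1
  proof (rule ccontr)
    assume "F1 \<noteq> F0"
    moreover have "degree F1 = degree F0"
      using F0 F1 by (meson le_antisym)
    then have "degree (F1 - F0) \<le> degree F0" "coeff (F1 - F0) (degree F0) = 0"
      using degree_diff_le_max[of F1 F0] F0 F1 by simp_all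
    ultimately have "degree (F1 - F0) < degree F0"
      by (metis eq_iff_diff_eq_0 le_neq_implies_less leading_coeff_0_iff)
    then show False
      using F0 F1 skew_I_diff[of F1 \<Omega> F0] \<open>F1 \<noteq> F0\<close> by fastforce
  qed
  have "(THE F. ?min F) = F0"
    by (rule the_equality[of ?min F0, OF F0 uniq])
  then have "skew_F \<sigma> \<delta> \<Omega> = F0"
    using assms by (simp add: skew_F_def)
  then show "skew_F \<sigma> \<delta> \<Omega> \<in> ?I" "skew_F \<sigma> \<delta> \<Omega> \<noteq> 0"
    "\<And>G. G \<in> ?I \<Longrightarrow> G \<noteq> 0 \<Longrightarrow> degree (skew_F \<sigma> \<delta> \<Omega>) \<le> degree G"
    using F0 by auto
qed

end

section \<open>The remainder map\<close>

context skew_poly_ring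
begin

definition remainders :: "'a poly list \<Rightarrow> 'a poly \<Rightarrow> nat \<Rightarrow> 'a poly" where
  "remainders Ps F = (\<lambda>i\<in>{..<length Ps}. skew_rem \<sigma> \<delta> F (Ps ! i))"

lemma remainders_in_PiE:
  assumes "0 \<notin> set Ps"
  shows "remainders Ps F \<in> (\<Pi>\<^sub>E i\<in>{..<length Ps}. deg_less (degree (Ps ! i)))"
proof -
  have "Ps ! i \<noteq> 0" if "i < length Ps" for i
    using assms that nth_mem by metis
  then show ?thesis
    by (auto simp: remainders_def skew_rem_in_deg_less)
qed

lemma left_linear_on_remainders:
  assumes "0 \<notin> set Ps"
  shows "left_linear_on V (length Ps) (remainders Ps)"
proof -
  have "Ps ! i \<noteq> 0" if "i < length Ps" for i
    using assms that nth_mem by metis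
  then show ?thesis
    by (auto simp: left_linear_on_def remainders_def skew_rem_add skew_rem_lsmult
        intro!: restrict_ext)
qed

lemma remainders_eq_iff:
  assumes "0 \<notin> set Ps"
  shows "remainders Ps F = remainders Ps G \<longleftrightarrow> F - G \<in> skew_I \<sigma> \<delta> (set Ps)"
proof -
  have "remainders Ps F = remainders Ps G \<longleftrightarrow>
      (\<forall>i<length Ps. skew_rem \<sigma> \<delta> F (Ps ! i) = skew_rem \<sigma> \<delta> G (Ps ! i))"
    by (auto simp: remainders_def restrict_def fun_eq_iff)
  also have "\<dots> \<longleftrightarrow> (\<forall>P\<in>set Ps. skew_rem \<sigma> \<delta> F P = skew_rem \<sigma> \<delta> G P)"
    by (metis in_set_conv_nth)
  also have "\<dots> \<longleftrightarrow> (\<forall>P\<in>set Ps. \<exists>Q. F - G = Q \<star> P)"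
    using assms by (intro ball_cong refl skew_rem_eq_iff) auto
  also have "\<dots> \<longleftrightarrow> F - G \<in> skew_I \<sigma> \<delta> (set Ps)"
    by (simp add: mem_skew_I_iff)
  finally show ?thesis .
qed

lemma inj_on_remainders:
  assumes "0 \<notin> set Ps" "skew_I \<sigma> \<delta> (set Ps) \<noteq> {0}"
  shows "inj_on (remainders Ps) (deg_less (degree (skew_F \<sigma> \<delta> (set Ps))))"
proof (rule inj_onI)
  fix F G assume F: "F \<in> deg_less (degree (skew_F \<sigma> \<delta> (set Ps)))"
    and G: "G \<in> deg_less (degree (skew_F \<sigma> \<delta> (set Ps)))"
    and "remainders Ps F = remainders Ps G"
  then have "F - G \<in> skew_I \<sigma> \<delta> (set Ps)"
    using remainders_eq_iff[OF assms(1)] by blast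
  moreover have "F - G \<in> deg_less (degree (skew_F \<sigma> \<delta> (set Ps)))"
    using deg_less_diff[OF F G] .
  ultimately show "F = G"
    using skew_F_minimal(3)[OF assms(2)] by (force simp: deg_less_def)
qed

text \<open>Every remainder vector is already attained on \<open>deg_less (degree F\<^sub>\<Omega>)\<close>:
  reduce \<open>F\<close> modulo \<open>F\<^sub>\<Omega>\<close>, which lies in every \<open>(P\<^sub>i)\<close>.\<close>
lemma range_remainders:
  assumes "0 \<notin> set Ps" "skew_I \<sigma> \<delta> (set Ps) \<noteq> {0}"
  shows "range (remainders Ps) = remainders Ps ` deg_less (degree (skew_F \<sigma> \<delta> (set Ps)))"
proof (intro subset_antisym subsetI)
  fix y assume "y \<in> range (remainders Ps)"
  then obtain F where y: "y = remainders Ps F"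
    by blast
  obtain Q R where QR: "F = Q \<star> skew_F \<sigma> \<delta> (set Ps) + R"
    "R \<in> deg_less (degree (skew_F \<sigma> \<delta> (set Ps)))"
    using skew_division_exists[OF skew_F_minimal(2)[OF assms(2)]] by blast
  then have "F - R \<in> skew_I \<sigma> \<delta> (set Ps)"
    using skew_I_mult_left[OF skew_F_minimal(1)[OF assms(2)]] by simp
  then have "y = remainders Ps R"
    using remainders_eq_iff[OF assms(1)] y by blast
  with QR(2) show "y \<in> remainders Ps ` deg_less (degree (skew_F \<sigma> \<delta> (set Ps)))"
    by blast
qed auto

end

lemma P_independent_iff_degree_skew_F:
  assumes "distinct Ps" "skew_I \<sigma> \<delta> (set Ps) \<noteq> {0}"
  shows "P_independent \<sigma> \<delta> (set Ps) \<longleftrightarrow>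
    degree (skew_F \<sigma> \<delta> (set Ps)) = (\<Sum>i<length Ps. degree (Ps ! i))"
  using assms
  by (simp add: P_independent_def sum_list_distinct_conv_sum_set[symmetric] sum_list_sum_nth
      atLeast0LessThan)

theorem mainTheorem3:
  fixes \<sigma> \<delta> :: "'a::division_ring \<Rightarrow> 'a" and Ps :: "'a poly list"
  assumes "ring_endo \<sigma>" and "sigma_derivation \<sigma> \<delta>"
    and "distinct Ps" and "\<forall>P\<in>set Ps. degree P \<ge> 1"
    and "skew_I \<sigma> \<delta> (set Ps) \<noteq> {0}"
  defines "n \<equiv> length Ps"
    and "N \<equiv> degree (skew_F \<sigma> \<delta> (set Ps))"
    and "\<phi> \<equiv> (\<lambda>F. \<lambda>i\<in>{..<length Ps}. skew_rem \<sigma> \<delta> F (Ps ! i))"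
  shows "(P_independent \<sigma> \<delta> (set Ps)
            \<longleftrightarrow> (left_linear_on (deg_less N) n \<phi> \<and>
                 bij_betw \<phi> (deg_less N) (\<Pi>\<^sub>E i\<in>{..<n}. deg_less (degree (Ps ! i)))))
       \<and> (P_independent \<sigma> \<delta> (set Ps)
            \<longleftrightarrow> \<phi> ` UNIV = (\<Pi>\<^sub>E i\<in>{..<n}. deg_less (degree (Ps ! i))))"
proof -
  interpret skew_poly_ring \<sigma> \<delta>
    using assms(1,2) by unfold_locales
  have nz: "0 \<notin> set Ps"
    using assms(4) by force
  have \<phi>: "\<phi> = remainders Ps"
    unfolding \<phi>_def by (intro ext) (simp add: remainders_def)
  have lin: "left_linear_on (deg_less N) n \<phi>"
    unfolding \<phi> n_def by (rule left_linear_on_remainders[OF nz])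
  have inj: "inj_on \<phi> (deg_less N)"
    unfolding \<phi> N_def by (rule inj_on_remainders[OF nz assms(5)])
  have "\<phi> ` deg_less N \<subseteq> (\<Pi>\<^sub>E i\<in>{..<n}. deg_less (degree (Ps ! i)))"
    unfolding \<phi> n_def using remainders_in_PiE[OF nz] by blast
  then have "\<phi> ` deg_less N = (\<Pi>\<^sub>E i\<in>{..<n}. deg_less (degree (Ps ! i))) \<longleftrightarrow>
      P_independent \<sigma> \<delta> (set Ps)"
    using left_linear_image_eq_PiE_iff[OF lin inj]
      P_independent_iff_degree_skew_F[OF assms(3,5)] by (simp add: N_def n_def)
  moreover have "\<phi> ` UNIV = \<phi> ` deg_less N"
    unfolding \<phi> N_def by (rule range_remainders[OF nz assms(5)])
  ultimately show ?thesis
    using lin inj by (auto simp: bij_betw_def)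
qed

end
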